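(* Let $s\geq1$ be an integer, $\alpha'>1>\alpha>0$ and $\theta_1,\theta_2>0$. If $X$ has distribution $\Gamma(\alpha',\theta_1)$ and $Y$ has distribution $\Gamma(\alpha,\theta_2)$, then $X\leq_{s\text{-IFR}}Y$, i.e. the $\Gamma(\alpha',\theta_1)$ distribution is more $s$-IFR than the $\Gamma(\alpha,\theta_2)$ distribution.
   Context: $\Gamma(\alpha,\theta)$ is the Gamma distribution with density $\frac{x^{\alpha-1}e^{-x/\theta}}{\theta^\alpha\Gamma(\alpha)}$, $x>0$. For a nonnegative random variable $X$ with density $f_X$: $\overline{T}_{X,0}=f_X$, $\widetilde{\mu}_{X,0}=1$, and for $s\geq1$, $x\geq0$, $\overline{T}_{X,s}(x)=\frac{1}{\widetilde{\mu}_{X,s-1}}\int_x^\infty \overline{T}_{X,s-1}(t)\,dt$ with $\widetilde{\mu}_{X,s}=\int_0^\infty \overline{T}_{X,s}(t)\,dt$, and $\overline{T}_{X,s}(x)=1$ for $x<0$. We write $X\leq_{s\text{-IFR}}Y$ ("$X$ is more $s$-IFR than $Y$") if $c_s(x)=\overline{T}_{Y,s}^{-1}(\overline{T}_{X,s}(x))$ is convex. *)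

theory Defs
  imports "HOL-Analysis.Analysis"
begin

definition gamma_density :: "real \<Rightarrow> real \<Rightarrow> real \<Rightarrow> real" where
  "gamma_density a th x =
     (if x > 0 then x powr (a - 1) * exp (- x / th) / (th powr a * Gamma a) else 0)"

text \<open>Iterated equilibrium tails: sTbar f s = T-bar_{X,s} for a density f;
  smu f s = mu-tilde_{X,s} (with smu f 0 = 1).\<close>
fun sTbar :: "(real \<Rightarrow> real) \<Rightarrow> nat \<Rightarrow> real \<Rightarrow> real" where
  "sTbar f 0 x = f x"
| "sTbar f (Suc s) x =
     (if x < 0 then 1
      else (LINT t:{x..}|lborel. sTbar f s t) /
           (if s = 0 then 1 else LINT t:{0..}|lborel. sTbar f s t))"

definition smu :: "(real \<Rightarrow> real) \<Rightarrow> nat \<Rightarrow> real" where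
  "smu f s = (if s = 0 then 1 else LINT t:{0..}|lborel. sTbar f s t)"

text \<open>X (density f) is more s-IFR than Y (density g): the map
  c_s(x) = T_{Y,s}^{-1}(T_{X,s}(x)) is convex on [0,\<infinity>), where the inverse is
  taken of T_{Y,s} restricted to [0,\<infinity>).\<close>
definition more_s_IFR :: "nat \<Rightarrow> (real \<Rightarrow> real) \<Rightarrow> (real \<Rightarrow> real) \<Rightarrow> bool" where
  "more_s_IFR s f g \<longleftrightarrow>
     convex_on {0..} (\<lambda>x. inv_into {0..} (sTbar g s) (sTbar f s x))"

end

theory Submission
  imports Defs "HOL-Real_Asymp.Real_Asymp" "HOL-Probability.Probability_Mass_Function"
begin

(* Let T be the equilibrium tail of a density g on [0,\<infinity>) and r(x) = g(x) / \<integral>_x^\<infinity> g its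
   hazard rate, so that (- ln T)' = r.  Since 1/r(x) = \<integral>_0^\<infinity> g(x + u)/g(x) du, r increases
   (decreases) whenever the ratios g(x + u)/g(x) decrease (increase) in x; then ln T is
   concave (convex), which says exactly that the ratios T(x + u)/T(x) decrease (increase)
   again.  For the Gamma density g(x + u)/g(x) = (1 + u/x)^(a-1) e^(-u/\<theta>), so by induction
   every iterated tail of \<Gamma>(\<alpha>',\<theta>1) is log-concave and every one of \<Gamma>(\<alpha>,\<theta>2) is
   log-convex.  Finally, if T_Y(c x) = T_X(x) with ln T_X concave and ln T_Y convex and
   decreasing, then ln T_Y(c((1-t)x + t y)) \<ge> (1-t) ln T_Y(c x) + t ln T_Y(c y)
   \<ge> ln T_Y((1-t) c x + t c y), so c is convex. *)

section \<open>Convexity on the closed half-line\<close>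

lemma convex_on_atLeast_0_if_greaterThan_0:
  fixes \<phi> :: "real \<Rightarrow> real"
  assumes cont: "continuous_on {0..} \<phi>" and cv: "convex_on {0<..} \<phi>"
  shows "convex_on {0..} \<phi>"
proof (rule convex_on_linorderI)
  fix t x y :: real
  assume t: "0 < t" "t < 1" and xy: "x \<in> {0..}" "y \<in> {0..}" "x < y"
  show "\<phi> ((1 - t) *\<^sub>R x + t *\<^sub>R y) \<le> (1 - t) * \<phi> x + t * \<phi> y"
  proof (cases "x > 0")
    case True
    then show ?thesis using convex_onD[OF cv, of t x y] t xy by auto
  next
    case False
    then have x0: "x = 0" and y: "y > 0" using xy by auto
    have "\<forall>\<^sub>F e in at_right 0. \<phi> ((1 - t) * e + t * y) \<le> (1 - t) * \<phi> e + t * \<phi> y"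
      using eventually_at_right_less[of 0]
      by eventually_elim (use convex_onD[OF cv, of t _ y] t y in auto)
    moreover have "((\<lambda>e. \<phi> ((1 - t) * e + t * y)) \<longlongrightarrow> \<phi> (t * y)) (at_right 0)"
    proof -
      have "isCont \<phi> (t * y)"
        using cont t y by (intro continuous_on_interior[of "{0..}"]) auto
      moreover have "((\<lambda>e. (1 - t) * e + t * y) \<longlongrightarrow> (1 - t) * 0 + t * y) (at_right 0)"
        by (intro tendsto_intros)
      ultimately show ?thesis using isCont_tendsto_compose by fastforce
    qed
    moreover have "((\<lambda>e. (1 - t) * \<phi> e + t * \<phi> y) \<longlongrightarrow> (1 - t) * \<phi> 0 + t * \<phi> y) (at_right 0)"
    proof -
      have "(\<phi> \<longlongrightarrow> \<phi> 0) (at 0 within {0..})"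
        using cont by (simp add: continuous_on_def)
      then have "(\<phi> \<longlongrightarrow> \<phi> 0) (at_right 0)"
        by (rule tendsto_mono[rotated]) (rule at_le, auto)
      then show ?thesis by (intro tendsto_intros)
    qed
    ultimately have "\<phi> (t * y) \<le> (1 - t) * \<phi> 0 + t * \<phi> y"
      by (intro tendsto_le[of "at_right 0"]) auto
    then show ?thesis using x0 by simp
  qed
qed (rule convex_real_interval)

lemma concave_on_atLeast_0_if_greaterThan_0:
  fixes \<phi> :: "real \<Rightarrow> real"
  assumes "continuous_on {0..} \<phi>" and "concave_on {0<..} \<phi>"
  shows "concave_on {0..} \<phi>"
  using convex_on_atLeast_0_if_greaterThan_0[of "\<lambda>x. - \<phi> x"] assms
  by (simp add: concave_on_def continuous_on_minus)

lemma concave_on_increments_antimono: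
  fixes \<phi> :: "real \<Rightarrow> real"
  assumes cv: "concave_on {0..} \<phi>" and "0 \<le> x" "x \<le> y" "0 \<le> u"
  shows "\<phi> x + \<phi> (y + u) \<le> \<phi> y + \<phi> (x + u)"
proof (cases "u = 0 \<or> x = y")
  case False
  then have L: "y + u - x > 0" using assms by auto
  define l where "l = (y - x) / (y + u - x)"
  have l: "0 \<le> l" "l \<le> 1" using L assms unfolding l_def by (auto simp: field_simps)
  \<comment> \<open>y and x + u are the convex combinations of x and y + u with weights l and 1 - l\<close>
  have "l * (y + u - x) = y - x" using L by (simp add: l_def)
  then have "(1 - l) *\<^sub>R x + l *\<^sub>R (y + u) = y"
    and "(1 - (1 - l)) *\<^sub>R x + (1 - l) *\<^sub>R (y + u) = x + u"
    by (simp_all add: algebra_simps)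
  then have "(1 - l) * \<phi> x + l * \<phi> (y + u) \<le> \<phi> y"
    and "l * \<phi> x + (1 - l) * \<phi> (y + u) \<le> \<phi> (x + u)"
    using concave_onD[OF cv, of l x "y + u"] concave_onD[OF cv, of "1 - l" x "y + u"] l assms
    by auto
  then show ?thesis by (simp add: algebra_simps)
qed auto

lemma convex_on_increments_mono:
  fixes \<phi> :: "real \<Rightarrow> real"
  assumes "convex_on {0..} \<phi>" and "0 \<le> x" "x \<le> y" "0 \<le> u"
  shows "\<phi> y + \<phi> (x + u) \<le> \<phi> x + \<phi> (y + u)"
  using concave_on_increments_antimono[of "\<lambda>x. - \<phi> x" x y u] assms by (simp add: concave_on_def)

lemma Ioc_0_1_subset_image_atLeast_0:
  fixes h :: "real \<Rightarrow> real"
  assumes cont: "continuous_on {0..} h" and "h 0 = 1" and lim: "(h \<longlongrightarrow> 0) at_top"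
  shows "{0<..1} \<subseteq> h ` {0..}"
proof
  fix v :: real assume v: "v \<in> {0<..1}"
  obtain b where b: "\<And>z. z \<ge> b \<Longrightarrow> h z < v"
    using order_tendstoD(2)[OF lim, of v] v by (auto simp: eventually_at_top_linorder)
  have "h (max b 0) \<le> v" "v \<le> h 0" "continuous_on {0..max b 0} h"
    using b[of "max b 0"] v \<open>h 0 = 1\<close> continuous_on_subset[OF cont] by auto
  then obtain y where "0 \<le> y" "h y = v"
    using IVT2'[of h "max b 0" v 0] by auto
  then show "v \<in> h ` {0..}" by force
qed

lemma convex_on_inv_into_comp:
  fixes TX TY :: "real \<Rightarrow> real"
  assumes TX: "\<And>x. x \<ge> 0 \<Longrightarrow> 0 < TX x" "\<And>x. x \<ge> 0 \<Longrightarrow> TX x \<le> 1"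
    and TX_log_concave: "concave_on {0..} (\<lambda>x. ln (TX x))"
    and TY: "continuous_on {0..} TY" "TY 0 = 1" "(TY \<longlongrightarrow> 0) at_top"
      "\<And>x. x \<ge> 0 \<Longrightarrow> 0 < TY x"
    and TY_decreasing: "\<And>x y. 0 \<le> x \<Longrightarrow> x < y \<Longrightarrow> TY y < TY x"
    and TY_log_convex: "convex_on {0..} (\<lambda>x. ln (TY x))"
  shows "convex_on {0..} (\<lambda>x. inv_into {0..} TY (TX x))"
proof (rule convex_onI)
  define c where "c x = inv_into {0..} TY (TX x)" for x
  have c: "c x \<ge> 0" "TY (c x) = TX x" if "x \<ge> 0" for x
  proof -
    have "TX x \<in> TY ` {0..}"
      using Ioc_0_1_subset_image_atLeast_0[OF TY(1-3)] TX that by auto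
    from inv_into_into[OF this] f_inv_into_f[OF this]
    show "c x \<ge> 0" "TY (c x) = TX x" unfolding c_def by auto
  qed
  fix t x y :: real
  assume t: "0 < t" "t < 1" and xy: "x \<in> {0..}" "y \<in> {0..}"
  define z where "z = (1 - t) * x + t * y"
  define w where "w = (1 - t) * c x + t * c y"
  have "z \<ge> 0" "w \<ge> 0" using t xy c unfolding z_def w_def by auto
  have "ln (TY w) \<le> (1 - t) * ln (TY (c x)) + t * ln (TY (c y))"
    using convex_onD[OF TY_log_convex, of t "c x" "c y"] t xy c unfolding w_def by auto
  also have "\<dots> = (1 - t) * ln (TX x) + t * ln (TX y)"
    using xy c by simp
  also have "\<dots> \<le> ln (TX z)"
    using concave_onD[OF TX_log_concave, of t x y] t xy unfolding z_def by auto
  also have "\<dots> = ln (TY (c z))"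
    using c \<open>z \<ge> 0\<close> by simp
  finally have "TY w \<le> TY (c z)"
    using TY(4) \<open>w \<ge> 0\<close> TX(1) c \<open>z \<ge> 0\<close> by simp
  then have "c z \<le> w"
    using TY_decreasing[OF \<open>w \<ge> 0\<close>, of "c z"] by force
  then show "c ((1 - t) *\<^sub>R x + t *\<^sub>R y) \<le> (1 - t) * c x + t * c y"
    unfolding z_def w_def c_def by simp
qed simp

lemma set_integral_lborel_if_has_integral_nonneg:
  fixes f :: "real \<Rightarrow> real"
  assumes meas: "f \<in> borel_measurable borel" and S: "S \<in> sets borel"
    and nonneg: "\<And>x. x \<in> S \<Longrightarrow> 0 \<le> f x" and f: "(f has_integral I) S"
  shows "set_integrable lborel S f" "(LINT x:S|lborel. f x) = I"
proof -
  have "f absolutely_integrable_on S"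
    using f nonneg by (blast intro: nonnegative_absolutely_integrable_1)
  moreover have "(\<lambda>x. indicator S x *\<^sub>R f x) \<in> borel_measurable lborel"
    using meas S by measurable
  ultimately show si: "set_integrable lborel S f"
    unfolding set_integrable_def using integrable_completion by blast
  show "(LINT x:S|lborel. f x) = I"
    using set_borel_integral_eq_integral(2)[OF si] f by (simp add: integral_unique)
qed

lemma set_integral_exp_atLeast:
  fixes \<beta> c :: real
  assumes "\<beta> > 0"
  shows "set_integrable lborel {c..} (\<lambda>t. exp (- \<beta> * t))"
    "(LINT t:{c..}|lborel. exp (- \<beta> * t)) = exp (- \<beta> * c) / \<beta>"
  by (rule set_integral_lborel_if_has_integral_nonneg[OF _ _ _
        has_integral_exp_minus_to_infinity[OF assms]]; simp)+

lemma set_integral_atLeast_shift: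
  fixes g :: "real \<Rightarrow> real"
  assumes "set_integrable lborel {y..} g"
  shows "set_integrable lborel {0..} (\<lambda>u. g (y + u))"
    "(LINT t:{y..}|lborel. g t) = (LINT u:{0..}|lborel. g (y + u))"
proof -
  have eq: "(\<lambda>u. indicator {y..} (y + 1 * u) *\<^sub>R g (y + 1 * u))
      = (\<lambda>u. indicator {0..} u *\<^sub>R g (y + u))"
    by (auto simp: indicator_def)
  show "set_integrable lborel {0..} (\<lambda>u. g (y + u))"
    using lborel_integrable_real_affine[of _ 1 y] assms unfolding set_integrable_def eq[symmetric]
    by simp
  show "(LINT t:{y..}|lborel. g t) = (LINT u:{0..}|lborel. g (y + u))"
    unfolding set_lebesgue_integral_def
    using lborel_integral_real_affine[of 1 "\<lambda>t. indicator {y..} t *\<^sub>R g t" y] eq by simp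
qed

section \<open>Tail integrals and equilibrium tails\<close>

definition tail_integral :: "(real \<Rightarrow> real) \<Rightarrow> real \<Rightarrow> real" where
  "tail_integral g x = (LINT t:{x..}|lborel. g t)"

definition equilibrium_tail :: "(real \<Rightarrow> real) \<Rightarrow> real \<Rightarrow> real" where
  "equilibrium_tail g x = (if x < 0 then 1 else tail_integral g x / tail_integral g 0)"

lemma tail_integral_nonneg:
  assumes "\<And>t. 0 \<le> g t"
  shows "0 \<le> tail_integral g x"
  unfolding tail_integral_def set_lebesgue_integral_def using assms
  by (intro integral_nonneg_AE AE_I2) (auto simp: indicator_def)

lemma tail_integral_eq_diff:
  assumes int: "set_integrable lborel {0..} g" and x: "0 \<le> x"
  shows "tail_integral g x = (LINT t:{0..}|lborel. g t) - (LINT t:{0..x}|lborel. g t)"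
proof -
  have int_x: "set_integrable lborel {0..x} g" and int_gt: "set_integrable lborel {x<..} g"
    and int_ge: "set_integrable lborel {x..} g"
    using x by (auto intro: set_integrable_subset[OF int])
  have "{0..} = {0..x} \<union> {x<..}" "{0..x} \<inter> {x<..} = {}" using x by auto
  then have "(LINT t:{0..}|lborel. g t) = (LINT t:{0..x}|lborel. g t) + (LINT t:{x<..}|lborel. g t)"
    using set_integral_Un[OF _ int_x int_gt] by simp
  moreover have "(LINT t:{x..}|lborel. g t) = (LINT t:{x<..}|lborel. g t)"
  proof (rule set_integral_cong_set)
    show "AE t in lborel. (t \<in> {x<..}) = (t \<in> {x..})"
      using AE_lborel_singleton[of x] by eventually_elim auto
  qed (use int_gt int_ge in \<open>auto simp: set_borel_measurable_def set_integrable_def\<close>)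
  ultimately show ?thesis unfolding tail_integral_def by simp
qed

lemma continuous_on_tail_integral:
  assumes int: "set_integrable lborel {0..} g"
  shows "continuous_on {0..} (tail_integral g)"
proof (rule continuous_on_eq)
  have "continuous_on UNIV (\<lambda>x. LINT t:{0..x}|lborel. g t)"
    by (rule continuous_on_LBINT, rule set_integrable_subset[OF int]) auto
  then have "continuous_on {0..} (\<lambda>x. LINT t:{0..x}|lborel. g t)"
    by (rule continuous_on_subset) simp
  then show "continuous_on {0..} (\<lambda>x. (LINT t:{0..}|lborel. g t) - (LINT t:{0..x}|lborel. g t))"
    by (intro continuous_on_diff continuous_on_const)
qed (simp add: tail_integral_eq_diff[OF int])

lemma has_real_derivative_tail_integral:
  assumes int: "set_integrable lborel {0..} g" and cont: "continuous_on {0<..} g" and x: "0 < x"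
  shows "(tail_integral g has_real_derivative - g x) (at x)"
proof -
  have g_int: "set_integrable lborel {0..b} g" for b
    by (rule set_integrable_subset[OF int]) auto
  have "isCont g x"
    using cont x by (simp add: continuous_on_eq_continuous_at)
  then have "((\<lambda>u. integral {0..u} g) has_vector_derivative g x) (at x within ({0..x+1} - {}))"
    using x set_borel_integral_eq_integral(1)[OF g_int]
    by (intro integral_has_vector_derivative_continuous_at)
       (auto simp: continuous_at_imp_continuous_within)
  moreover have "at x within ({0..x+1} - {}) = at x"
    using x by (intro at_within_interior) auto
  moreover have "(LINT t:{0..u}|lborel. g t) = integral {0..u} g" for u
    using set_borel_integral_eq_integral(2)[OF g_int] .
  ultimately have "((\<lambda>u. (LINT t:{0..}|lborel. g t) - (LINT t:{0..u}|lborel. g t))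
      has_real_derivative 0 - g x) (at x)"
    by (intro derivative_intros) (simp add: has_real_derivative_iff_has_vector_derivative)
  then show ?thesis
    unfolding diff_0 by (rule has_field_derivative_transform_within_open[of _ _ _ "{0<..}"])
       (use x in \<open>auto simp: tail_integral_eq_diff[OF int]\<close>)
qed

lemma tail_integral_strict_antimono:
  assumes int: "set_integrable lborel {0..} g" and cont: "continuous_on {0<..} g"
    and pos: "\<And>t. 0 < t \<Longrightarrow> 0 < g t" and "0 \<le> x" "x < y"
  shows "tail_integral g y < tail_integral g x"
proof (rule DERIV_neg_imp_decreasing_open[OF \<open>x < y\<close>])
  show "\<exists>d. (tail_integral g has_real_derivative d) (at z) \<and> d < 0" if "x < z" for z
    using has_real_derivative_tail_integral[OF int cont, of z] pos[of z] that \<open>0 \<le> x\<close> by auto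
  show "continuous_on {x..y} (tail_integral g)"
    using continuous_on_tail_integral[OF int] by (rule continuous_on_subset) (use \<open>0 \<le> x\<close> in auto)
qed

lemma tail_integral_exp_bound:
  assumes int: "set_integrable lborel {0..} g" and "0 < \<beta>" "0 \<le> b"
    and bound: "\<And>t. b \<le> t \<Longrightarrow> g t \<le> C * exp (- \<beta> * t)" and "b \<le> x"
  shows "tail_integral g x \<le> C / \<beta> * exp (- \<beta> * x)"
proof -
  have "tail_integral g x \<le> (LINT t:{x..}|lborel. C * exp (- \<beta> * t))"
    unfolding tail_integral_def using assms
    by (intro set_integral_mono set_integrable_mult_right set_integral_exp_atLeast(1)
        set_integrable_subset[OF int]) auto
  also have "\<dots> = C / \<beta> * exp (- \<beta> * x)"
    using set_integral_exp_atLeast(2)[OF \<open>0 < \<beta>\<close>, of x] by simp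
  finally show ?thesis .
qed

(* The exponential tail bound is what makes every equilibrium tail integrable again. *)
definition admissible_density :: "(real \<Rightarrow> real) \<Rightarrow> bool" where
  "admissible_density g \<longleftrightarrow> g \<in> borel_measurable borel \<and> (\<forall>t. 0 \<le> g t) \<and> (\<forall>t>0. 0 < g t)
     \<and> continuous_on {0<..} g \<and> set_integrable lborel {0..} g
     \<and> (\<exists>C \<beta>. 0 < \<beta> \<and> (\<forall>\<^sub>F t in at_top. g t \<le> C * exp (- \<beta> * t)))"

lemma tail_integral_pos:
  assumes "admissible_density g" "0 \<le> x"
  shows "0 < tail_integral g x"
  using assms tail_integral_strict_antimono[of g x "x + 1"] tail_integral_nonneg[of g "x + 1"]
  unfolding admissible_density_def by force

lemma equilibrium_tail_pos:
  assumes "admissible_density g"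
  shows "0 < equilibrium_tail g x"
  using tail_integral_pos[OF assms] by (simp add: equilibrium_tail_def)

lemma equilibrium_tail_0:
  assumes "admissible_density g"
  shows "equilibrium_tail g 0 = 1"
  using tail_integral_pos[OF assms, of 0] by (simp add: equilibrium_tail_def)

lemma equilibrium_tail_strict_antimono:
  assumes "admissible_density g" "0 \<le> x" "x < y"
  shows "equilibrium_tail g y < equilibrium_tail g x"
  using assms tail_integral_strict_antimono[of g x y] tail_integral_pos[OF assms(1), of 0]
  unfolding admissible_density_def equilibrium_tail_def by (simp add: divide_strict_right_mono)

lemma equilibrium_tail_le_1:
  assumes "admissible_density g"
  shows "equilibrium_tail g x \<le> 1"
  using equilibrium_tail_strict_antimono[OF assms, of 0 x] equilibrium_tail_0[OF assms]
  by (cases "x \<le> 0") (auto simp: equilibrium_tail_def)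

lemma continuous_on_equilibrium_tail:
  assumes "admissible_density g"
  shows "continuous_on {0..} (equilibrium_tail g)"
proof -
  have "continuous_on {0..} (\<lambda>x. tail_integral g x / tail_integral g 0)"
    using assms tail_integral_pos[OF assms, of 0]
    by (intro continuous_intros continuous_on_tail_integral) (auto simp: admissible_density_def)
  then show ?thesis
    by (rule continuous_on_cong[THEN iffD1, rotated -1]) (auto simp: equilibrium_tail_def)
qed

lemma equilibrium_tail_exp_bound:
  assumes "admissible_density g"
  obtains C \<beta> where "0 < \<beta>" "\<forall>\<^sub>F x in at_top. equilibrium_tail g x \<le> C * exp (- \<beta> * x)"
proof -
  obtain C \<beta> b where \<beta>: "0 < \<beta>" and bound: "\<And>t. b \<le> t \<Longrightarrow> g t \<le> C * exp (- \<beta> * t)"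
    using assms unfolding admissible_density_def eventually_at_top_linorder by blast
  define \<mu> where "\<mu> = tail_integral g 0"
  have \<mu>: "0 < \<mu>" unfolding \<mu>_def by (rule tail_integral_pos[OF assms order_refl])
  have "equilibrium_tail g x \<le> C / (\<beta> * \<mu>) * exp (- \<beta> * x)" if x: "max b 0 \<le> x" for x
  proof -
    have "equilibrium_tail g x = tail_integral g x / \<mu>"
      using x by (simp add: equilibrium_tail_def \<mu>_def)
    also have "\<dots> \<le> C / \<beta> * exp (- \<beta> * x) / \<mu>"
      using assms bound x \<beta> \<mu>
      by (intro divide_right_mono tail_integral_exp_bound[of g \<beta> "max b 0"])
        (auto simp: admissible_density_def)
    finally show ?thesis by simp
  qed
  then show ?thesis
    using \<beta> that unfolding eventually_at_top_linorder by blast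
qed

lemma equilibrium_tail_tendsto_0:
  assumes "admissible_density g"
  shows "(equilibrium_tail g \<longlongrightarrow> 0) at_top"
proof -
  obtain C \<beta> where \<beta>: "0 < \<beta>" and bound: "\<forall>\<^sub>F x in at_top. equilibrium_tail g x \<le> C * exp (- \<beta> * x)"
    using equilibrium_tail_exp_bound[OF assms] .
  have "((\<lambda>x. exp (- \<beta> * x)) \<longlongrightarrow> 0) at_top"
    using \<beta> by real_asymp
  then have lim: "((\<lambda>x. C * exp (- \<beta> * x)) \<longlongrightarrow> 0) at_top"
    by (rule tendsto_mult_right_zero)
  have "\<forall>\<^sub>F x in at_top. 0 \<le> equilibrium_tail g x"
    using equilibrium_tail_pos[OF assms] by (simp add: less_imp_le)
  from tendsto_sandwich[OF this bound tendsto_const lim] show ?thesis .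
qed

lemma borel_measurable_equilibrium_tail:
  assumes g: "admissible_density g"
  shows "equilibrium_tail g \<in> borel_measurable borel"
proof -
  have "mono (\<lambda>x. - equilibrium_tail g x)"
  proof (rule monoI)
    fix x y :: real assume "x \<le> y"
    then show "- equilibrium_tail g x \<le> - equilibrium_tail g y"
      using equilibrium_tail_strict_antimono[OF g, of x y] equilibrium_tail_le_1[OF g, of y]
      by (cases "x < 0"; cases "x = y") (auto simp: equilibrium_tail_def)
  qed
  from borel_measurable_uminus[OF borel_measurable_mono[OF this]] show ?thesis by simp
qed

lemma set_integrable_equilibrium_tail:
  assumes g: "admissible_density g"
  shows "set_integrable lborel {0..} (equilibrium_tail g)"
proof -
  obtain C \<beta> b where \<beta>: "0 < \<beta>"
    and bound: "\<And>t. b \<le> t \<Longrightarrow> equilibrium_tail g t \<le> C * exp (- \<beta> * t)"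
    using equilibrium_tail_exp_bound[OF g] unfolding eventually_at_top_linorder by metis
  define K where "K = max (exp (\<beta> * b)) C"
  have "0 < K" unfolding K_def by (simp add: less_max_iff_disj)
  have K: "equilibrium_tail g t \<le> K * exp (- \<beta> * t)" for t
  proof (cases "b \<le> t")
    case True
    then show ?thesis using bound[OF True] unfolding K_def
      by (smt (verit) exp_gt_zero mult_right_mono max.cobounded2)
  next
    case False
    have "1 \<le> exp (\<beta> * b) * exp (- \<beta> * t)"
      using False \<beta> by (simp flip: exp_add add: algebra_simps)
    also have "\<dots> \<le> K * exp (- \<beta> * t)" unfolding K_def by (intro mult_right_mono) auto
    finally show ?thesis using equilibrium_tail_le_1[OF g, of t] by linarith
  qed
  show ?thesis
  proof (rule set_integrable_bound[where f="\<lambda>t. K * exp (- \<beta> * t)"])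
    show "set_integrable lborel {0..} (\<lambda>t. K * exp (- \<beta> * t))"
      using set_integral_exp_atLeast(1)[OF \<beta>] by (rule set_integrable_mult_right)
    show "set_borel_measurable lborel {0..} (equilibrium_tail g)"
      unfolding set_borel_measurable_def using borel_measurable_equilibrium_tail[OF g] by measurable
    show "AE x in lborel. x \<in> {0..} \<longrightarrow> norm (equilibrium_tail g x) \<le> norm (K * exp (- \<beta> * x))"
      using K equilibrium_tail_pos[OF g] \<open>0 < K\<close> by (intro AE_I2) (simp add: abs_mult less_imp_le)
  qed
qed

lemma admissible_equilibrium_tail:
  assumes g: "admissible_density g"
  shows "admissible_density (equilibrium_tail g)"
proof -
  have "continuous_on {0<..} (equilibrium_tail g)"
    using continuous_on_equilibrium_tail[OF g] by (rule continuous_on_subset) auto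
  moreover have "\<exists>C \<beta>. 0 < \<beta> \<and> (\<forall>\<^sub>F t in at_top. equilibrium_tail g t \<le> C * exp (- \<beta> * t))"
    using equilibrium_tail_exp_bound[OF g] by metis
  ultimately show ?thesis
    unfolding admissible_density_def
    using borel_measurable_equilibrium_tail[OF g] set_integrable_equilibrium_tail[OF g]
      equilibrium_tail_pos[OF g] less_imp_le by blast
qed

lemma has_real_derivative_ln_equilibrium_tail:
  assumes g: "admissible_density g" and x: "0 < x"
  shows "((\<lambda>x. ln (equilibrium_tail g x)) has_real_derivative - (g x / tail_integral g x)) (at x)"
proof -
  have "(tail_integral g has_real_derivative - g x) (at x)"
    using g x by (intro has_real_derivative_tail_integral) (auto simp: admissible_density_def)
  from DERIV_chain2[OF DERIV_ln_divide[OF tail_integral_pos[OF g]] this] x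
  have "((\<lambda>x. ln (tail_integral g x)) has_real_derivative - (g x / tail_integral g x)) (at x)"
    by simp
  then have "((\<lambda>x. ln (tail_integral g x) - ln (tail_integral g 0))
      has_real_derivative - (g x / tail_integral g x) - 0) (at x)"
    by (intro derivative_intros)
  then show ?thesis
    unfolding diff_0_right
  proof (rule has_field_derivative_transform_within_open[OF _ open_greaterThan])
    fix y :: real assume "y \<in> {0<..}"
    then show "ln (tail_integral g y) - ln (tail_integral g 0) = ln (equilibrium_tail g y)"
      using tail_integral_pos[OF g, of y] tail_integral_pos[OF g, of 0]
      by (simp add: equilibrium_tail_def ln_div)
  qed (use x in simp)
qed

lemma continuous_on_ln_equilibrium_tail:
  assumes g: "admissible_density g"
  shows "continuous_on {0..} (\<lambda>x. ln (equilibrium_tail g x))"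
  using continuous_on_equilibrium_tail[OF g] equilibrium_tail_pos[OF g]
  by (intro continuous_intros) (auto simp: less_imp_neq[symmetric])

section \<open>Monotone shift ratios\<close>

(* g(x + u)/g(x) is antitone (monotone) in x > 0, cross-multiplied. *)
definition shift_ratio_antitone :: "(real \<Rightarrow> real) \<Rightarrow> bool" where
  "shift_ratio_antitone g \<longleftrightarrow>
     (\<forall>x y u. 0 < x \<longrightarrow> x \<le> y \<longrightarrow> 0 \<le> u \<longrightarrow> g x * g (y + u) \<le> g y * g (x + u))"

definition shift_ratio_mono :: "(real \<Rightarrow> real) \<Rightarrow> bool" where
  "shift_ratio_mono g \<longleftrightarrow>
     (\<forall>x y u. 0 < x \<longrightarrow> x \<le> y \<longrightarrow> 0 \<le> u \<longrightarrow> g y * g (x + u) \<le> g x * g (y + u))"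

lemma hazard_rate_le_if_shifts_le:
  assumes g: "admissible_density g" and "0 \<le> a" "0 \<le> b"
    and le: "\<And>u. 0 \<le> u \<Longrightarrow> g a * g (b + u) \<le> g b * g (a + u)"
  shows "g a / tail_integral g a \<le> g b / tail_integral g b"
proof -
  have int: "set_integrable lborel {x..} g" if "0 \<le> x" for x
    using g that by (auto simp: admissible_density_def intro: set_integrable_subset)
  note shift = set_integral_atLeast_shift[OF int]
  have "g a * tail_integral g b = (LINT u:{0..}|lborel. g a * g (b + u))"
    using shift(2)[OF \<open>0 \<le> b\<close>] by (simp add: tail_integral_def)
  also have "\<dots> \<le> (LINT u:{0..}|lborel. g b * g (a + u))"
    using le shift(1) assms by (intro set_integral_mono set_integrable_mult_right) auto
  also have "\<dots> = g b * tail_integral g a"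
    using shift(2)[OF \<open>0 \<le> a\<close>] by (simp add: tail_integral_def)
  finally show ?thesis
    using tail_integral_pos[OF g] assms by (simp add: divide_simps algebra_simps)
qed

lemma concave_on_ln_equilibrium_tail:
  assumes g: "admissible_density g" and r: "shift_ratio_antitone g"
  shows "concave_on {0..} (\<lambda>x. ln (equilibrium_tail g x))"
proof (rule concave_on_atLeast_0_if_greaterThan_0[OF continuous_on_ln_equilibrium_tail[OF g]])
  have "convex_on {0<..} (\<lambda>x. - ln (equilibrium_tail g x))"
    using r DERIV_minus[OF has_real_derivative_ln_equilibrium_tail[OF g]]
    by (intro convex_on_realI[where f'="\<lambda>x. g x / tail_integral g x"]
        hazard_rate_le_if_shifts_le[OF g]) (auto simp: shift_ratio_antitone_def)
  then show "concave_on {0<..} (\<lambda>x. ln (equilibrium_tail g x))"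
    by (simp add: concave_on_def)
qed

lemma convex_on_ln_equilibrium_tail:
  assumes g: "admissible_density g" and r: "shift_ratio_mono g"
  shows "convex_on {0..} (\<lambda>x. ln (equilibrium_tail g x))"
proof (rule convex_on_atLeast_0_if_greaterThan_0[OF continuous_on_ln_equilibrium_tail[OF g]])
  show "convex_on {0<..} (\<lambda>x. ln (equilibrium_tail g x))"
    using r has_real_derivative_ln_equilibrium_tail[OF g]
    by (intro convex_on_realI[where f'="\<lambda>x. - (g x / tail_integral g x)"] le_imp_neg_le
        hazard_rate_le_if_shifts_le[OF g]) (auto simp: shift_ratio_mono_def)
qed

lemma shift_ratio_antitone_if_concave_ln:
  assumes pos: "\<And>x. 0 < T x" and cv: "concave_on {0..} (\<lambda>x. ln (T x))"
  shows "shift_ratio_antitone T"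
  unfolding shift_ratio_antitone_def
proof (intro allI impI)
  fix x y u :: real assume "0 < x" "x \<le> y" "0 \<le> u"
  then have "ln (T x * T (y + u)) \<le> ln (T y * T (x + u))"
    using concave_on_increments_antimono[OF cv, of x y u] pos[of x] pos[of y] pos[of "x + u"]
      pos[of "y + u"] by (simp add: ln_mult)
  then show "T x * T (y + u) \<le> T y * T (x + u)"
    using pos by (simp add: mult_pos_pos)
qed

lemma shift_ratio_mono_if_convex_ln:
  assumes pos: "\<And>x. 0 < T x" and cv: "convex_on {0..} (\<lambda>x. ln (T x))"
  shows "shift_ratio_mono T"
  unfolding shift_ratio_mono_def
proof (intro allI impI)
  fix x y u :: real assume "0 < x" "x \<le> y" "0 \<le> u"
  then have "ln (T y * T (x + u)) \<le> ln (T x * T (y + u))"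
    using convex_on_increments_mono[OF cv, of x y u] pos[of x] pos[of y] pos[of "x + u"]
      pos[of "y + u"] by (simp add: ln_mult)
  then show "T y * T (x + u) \<le> T x * T (y + u)"
    using pos by (simp add: mult_pos_pos)
qed

lemma shift_ratio_antitone_equilibrium_tail:
  assumes "admissible_density g" "shift_ratio_antitone g"
  shows "shift_ratio_antitone (equilibrium_tail g)"
  using shift_ratio_antitone_if_concave_ln equilibrium_tail_pos concave_on_ln_equilibrium_tail assms
  by blast

lemma shift_ratio_mono_equilibrium_tail:
  assumes "admissible_density g" "shift_ratio_mono g"
  shows "shift_ratio_mono (equilibrium_tail g)"
  using shift_ratio_mono_if_convex_ln equilibrium_tail_pos convex_on_ln_equilibrium_tail assms
  by blast

lemma sTbar_Suc_eq_equilibrium_tail: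
  assumes "tail_integral f 0 = 1"
  shows "sTbar f (Suc n) = equilibrium_tail (sTbar f n)"
proof
  fix x
  have "(if n = 0 then 1 else LINT t:{0..}|lborel. sTbar f n t) = (LINT t:{0..}|lborel. sTbar f n t)"
    using assms by (cases n) (simp_all add: tail_integral_def del: sTbar.simps(2))
  then show "sTbar f (Suc n) x = equilibrium_tail (sTbar f n) x"
    by (simp only: sTbar.simps(2) equilibrium_tail_def tail_integral_def)
qed

lemma sTbar_invariant:
  assumes "tail_integral f 0 = 1" and "P f" and step: "\<And>g. P g \<Longrightarrow> P (equilibrium_tail g)"
  shows "P (sTbar f n)"
proof (induction n)
  case 0
  have "sTbar f 0 = f" by (rule ext) simp
  then show ?case using \<open>P f\<close> by simp
next
  case (Suc n)
  then show ?case using step by (simp add: sTbar_Suc_eq_equilibrium_tail[OF assms(1)])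
qed

section \<open>The Gamma density\<close>

lemma gamma_density_nonneg:
  assumes "0 < a" "0 < th"
  shows "0 \<le> gamma_density a th t"
  using assms by (simp add: gamma_density_def)

lemma continuous_on_gamma_density:
  assumes "0 < a" "0 < th"
  shows "continuous_on {0<..} (gamma_density a th)"
proof -
  have "continuous_on {0<..} (\<lambda>x. x powr (a - 1) * exp (- x / th) / (th powr a * Gamma a))"
    using assms Gamma_real_pos[OF assms(1)] by (intro continuous_intros) (auto simp del: Gamma_real_pos)
  then show ?thesis
    by (rule continuous_on_cong[THEN iffD1, rotated -1]) (auto simp: gamma_density_def)
qed

lemma gamma_density_integral:
  assumes a: "0 < a" and th: "0 < th"
  shows "set_integrable lborel {0..} (gamma_density a th)" "tail_integral (gamma_density a th) 0 = 1"
proof -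
  \<comment> \<open>substitute x = th * t in Euler's integral for Gamma a\<close>
  define k where "k x = indicator {0..} x *\<^sub>R (x powr (a - 1) / exp x)" for x :: real
  have "set_integrable lborel {0..} (\<lambda>x. x powr (a - 1) / exp x)"
    "(LINT x:{0..}|lborel. x powr (a - 1) / exp x) = Gamma a"
    using set_integral_lborel_if_has_integral_nonneg[OF _ _ _ Gamma_integral_real[OF a]] by auto
  then have k: "integrable lborel k" "integral\<^sup>L lborel k = Gamma a"
    unfolding k_def set_integrable_def set_lebesgue_integral_def .
  have eq: "indicator {0..} x *\<^sub>R gamma_density a th x = 1 / (th * Gamma a) * k (0 + (1 / th) * x)"
    for x
  proof (cases "x > 0")
    case True
    have "th powr a = th * th powr (a - 1)" using th by (simp add: powr_diff)
    then show ?thesis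
      using True th Gamma_real_pos[OF a]
      by (simp add: gamma_density_def k_def powr_divide exp_minus field_simps del: Gamma_real_pos)
  qed (use th in \<open>auto simp: k_def gamma_density_def indicator_def zero_le_divide_iff\<close>)
  have "integral\<^sup>L lborel k = \<bar>1 / th\<bar> *\<^sub>R integral\<^sup>L lborel (\<lambda>x. k (0 + (1 / th) * x))"
    using th by (intro lborel_integral_real_affine) simp
  then have "integral\<^sup>L lborel (\<lambda>x. k (0 + (1 / th) * x)) = th * Gamma a"
    using k th by (simp add: field_simps)
  moreover have "integrable lborel (\<lambda>x. k (0 + (1 / th) * x))"
    using th by (intro lborel_integrable_real_affine k) simp
  ultimately show "set_integrable lborel {0..} (gamma_density a th)"
    "tail_integral (gamma_density a th) 0 = 1"
    unfolding set_integrable_def tail_integral_def set_lebesgue_integral_def eq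
    using th Gamma_real_pos[OF a] by (auto simp del: Gamma_real_pos)
qed

lemma gamma_density_exp_bound:
  assumes a: "0 < a" and th: "0 < th"
  shows "\<forall>\<^sub>F t in at_top. gamma_density a th t \<le> exp (- t / (2 * th))"
proof -
  define D where "D = th powr a * Gamma a"
  have D: "D > 0" unfolding D_def using a th by simp
  have "((\<lambda>t. t powr (a - 1) * exp (- t / (2 * th))) \<longlongrightarrow> 0) at_top"
    using th by real_asymp
  then have "\<forall>\<^sub>F t in at_top. t powr (a - 1) * exp (- t / (2 * th)) < D"
    using D by (rule order_tendstoD)
  then show ?thesis
    using eventually_gt_at_top[of 0]
  proof eventually_elim
    case (elim t)
    define e where "e = exp (- t / (2 * th))"
    have "exp (- t / th) = e * e"
      unfolding e_def by (simp flip: exp_add add: field_simps)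
    then have "gamma_density a th t = (t powr (a - 1) * e) * e / D"
      using elim by (simp add: gamma_density_def D_def mult.assoc)
    also have "\<dots> \<le> D * e / D"
      using elim D by (intro divide_right_mono mult_right_mono) (auto simp: e_def)
    finally show ?case using D by (simp add: e_def)
  qed
qed

lemma admissible_gamma_density:
  assumes "0 < a" "0 < th"
  shows "admissible_density (gamma_density a th)"
proof -
  have "gamma_density a th \<in> borel_measurable borel"
    unfolding gamma_density_def by measurable
  moreover have "\<forall>t>0. 0 < gamma_density a th t"
    using assms by (simp add: gamma_density_def)
  moreover have "\<exists>C \<beta>. 0 < \<beta> \<and> (\<forall>\<^sub>F t in at_top. gamma_density a th t \<le> C * exp (- \<beta> * t))"
    using gamma_density_exp_bound[OF assms] assms
    by (intro exI[of _ 1] exI[of _ "1 / (2 * th)"]) simp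
  ultimately show ?thesis
    unfolding admissible_density_def
    using gamma_density_nonneg[OF assms] continuous_on_gamma_density[OF assms]
      gamma_density_integral(1)[OF assms]
    by blast
qed

lemma gamma_density_cross_products:
  assumes "0 < a" "0 < th" "0 < x" "0 < y" "0 \<le> u"
  obtains c where "c > 0"
    "gamma_density a th x * gamma_density a th (y + u) = (x * (y + u)) powr (a - 1) * c"
    "gamma_density a th y * gamma_density a th (x + u) = (y * (x + u)) powr (a - 1) * c"
proof
  define D where "D = th powr a * Gamma a"
  have "exp (- x / th) * exp (- (y + u) / th) = exp (- y / th) * exp (- (x + u) / th)"
    using assms by (simp flip: exp_add add: field_simps)
  then show "gamma_density a th x * gamma_density a th (y + u)
      = (x * (y + u)) powr (a - 1) * (exp (- x / th) * exp (- (y + u) / th) / D\<^sup>2)"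
    "gamma_density a th y * gamma_density a th (x + u)
      = (y * (x + u)) powr (a - 1) * (exp (- x / th) * exp (- (y + u) / th) / D\<^sup>2)"
    using assms by (simp_all add: gamma_density_def D_def powr_mult power2_eq_square)
  show "exp (- x / th) * exp (- (y + u) / th) / D\<^sup>2 > 0"
  proof -
    have "D > 0" unfolding D_def using assms by simp
    then show ?thesis by simp
  qed
qed

lemma shift_ratio_antitone_gamma_density:
  assumes "1 \<le> a" "0 < th"
  shows "shift_ratio_antitone (gamma_density a th)"
  unfolding shift_ratio_antitone_def
proof (intro allI impI)
  fix x y u :: real assume xyu: "0 < x" "x \<le> y" "0 \<le> u"
  obtain c where c: "c > 0"
    "gamma_density a th x * gamma_density a th (y + u) = (x * (y + u)) powr (a - 1) * c"
    "gamma_density a th y * gamma_density a th (x + u) = (y * (x + u)) powr (a - 1) * c"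
    using gamma_density_cross_products[of a th x y u] assms xyu by auto
  have "(x * (y + u)) powr (a - 1) \<le> (y * (x + u)) powr (a - 1)"
    using assms xyu by (intro powr_mono2) (auto simp: algebra_simps intro: mult_left_mono)
  then show "gamma_density a th x * gamma_density a th (y + u)
      \<le> gamma_density a th y * gamma_density a th (x + u)"
    unfolding c(2,3) using c(1) by (simp add: mult_right_mono)
qed

lemma shift_ratio_mono_gamma_density:
  assumes "0 < a" "a \<le> 1" "0 < th"
  shows "shift_ratio_mono (gamma_density a th)"
  unfolding shift_ratio_mono_def
proof (intro allI impI)
  fix x y u :: real assume xyu: "0 < x" "x \<le> y" "0 \<le> u"
  obtain c where c: "c > 0"
    "gamma_density a th x * gamma_density a th (y + u) = (x * (y + u)) powr (a - 1) * c"
    "gamma_density a th y * gamma_density a th (x + u) = (y * (x + u)) powr (a - 1) * c"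
    using gamma_density_cross_products[of a th x y u] assms xyu by auto
  have "0 < x * (y + u)"
    using xyu by (intro mult_pos_pos) auto
  moreover have "x * (y + u) \<le> y * (x + u)"
    using xyu by (simp add: algebra_simps mult_left_mono)
  ultimately have "(y * (x + u)) powr (a - 1) \<le> (x * (y + u)) powr (a - 1)"
    using assms by (intro powr_mono2') auto
  then show "gamma_density a th y * gamma_density a th (x + u)
      \<le> gamma_density a th x * gamma_density a th (y + u)"
    unfolding c(2,3) using c(1) by (simp add: mult_right_mono)
qed

theorem proposition2:
  fixes s :: nat and \<alpha>' \<alpha> \<theta>1 \<theta>2 :: real
  assumes "s \<ge> 1" and "\<alpha>' > 1" and "1 > \<alpha>" and "\<alpha> > 0"
    and "\<theta>1 > 0" and "\<theta>2 > 0"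
  shows "more_s_IFR s (gamma_density \<alpha>' \<theta>1) (gamma_density \<alpha> \<theta>2)"
proof -
  obtain n where s: "s = Suc n" using assms(1) by (cases s) auto
  define f where "f = gamma_density \<alpha>' \<theta>1"
  define g where "g = gamma_density \<alpha> \<theta>2"
  have f1: "tail_integral f 0 = 1" and g1: "tail_integral g 0 = 1"
    using gamma_density_integral(2) assms unfolding f_def g_def by auto
  have F: "admissible_density (sTbar f n) \<and> shift_ratio_antitone (sTbar f n)"
  proof (rule sTbar_invariant[OF f1])
    show "admissible_density f \<and> shift_ratio_antitone f"
      using admissible_gamma_density[of \<alpha>' \<theta>1] shift_ratio_antitone_gamma_density[of \<alpha>' \<theta>1] assms
      unfolding f_def by auto
  qed (blast intro: admissible_equilibrium_tail shift_ratio_antitone_equilibrium_tail)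
  have G: "admissible_density (sTbar g n) \<and> shift_ratio_mono (sTbar g n)"
  proof (rule sTbar_invariant[OF g1])
    show "admissible_density g \<and> shift_ratio_mono g"
      using admissible_gamma_density[of \<alpha> \<theta>2] shift_ratio_mono_gamma_density[of \<alpha> \<theta>2] assms
      unfolding g_def by auto
  qed (blast intro: admissible_equilibrium_tail shift_ratio_mono_equilibrium_tail)
  have "convex_on {0..} (\<lambda>x. inv_into {0..} (equilibrium_tail (sTbar g n))
      (equilibrium_tail (sTbar f n) x))"
  proof (rule convex_on_inv_into_comp)
    show "concave_on {0..} (\<lambda>x. ln (equilibrium_tail (sTbar f n) x))"
      using F by (blast intro: concave_on_ln_equilibrium_tail)
    show "convex_on {0..} (\<lambda>x. ln (equilibrium_tail (sTbar g n) x))"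
      using G by (blast intro: convex_on_ln_equilibrium_tail)
  qed (use F G in \<open>simp_all add: equilibrium_tail_pos equilibrium_tail_le_1
      continuous_on_equilibrium_tail equilibrium_tail_0 equilibrium_tail_tendsto_0
      equilibrium_tail_strict_antimono\<close>)
  then show ?thesis
    unfolding more_s_IFR_def f_def[symmetric] g_def[symmetric] s
      sTbar_Suc_eq_equilibrium_tail[OF f1] sTbar_Suc_eq_equilibrium_tail[OF g1] .
qed

end
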